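(* For all positive integers $r,s,k$ with $1\le r,s\le k$, $$\sum_{n\ge0}\big|\mathcal A_{2n+1}^{(k)}(r\to s)\big|\,x^{2n}=\begin{cases}(-1)^{r+s+1}\dfrac{xU_{2r-2}(x/2)U_{2k+1-2s}(x/2)}{U_{2k}(x/2)},&r<s,\\[2mm] 1-\dfrac{xU_{2r-2}(x/2)U_{2k+1-2r}(x/2)}{U_{2k}(x/2)},&r=s,\\[2mm] (-1)^{r+s+1}\dfrac{xU_{2s-2}(x/2)U_{2k+1-2r}(x/2)}{U_{2k}(x/2)},&r>s,\end{cases}$$ and $$\sum_{n\ge0}\big|\mathcal A_{2n+2}^{(k)}(r\to s)\big|\,x^{2n+1}=\begin{cases}(-1)^{r+s+1}\dfrac{xU_{2r-2}(x/2)U_{2k-2s}(x/2)}{U_{2k}(x/2)},&r\le s,\\[2mm] (-1)^{r+s+1}\dfrac{xU_{2s-1}(x/2)U_{2k-2r+1}(x/2)}{U_{2k}(x/2)},&r>s.\end{cases}$$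
   Context: For positive integers $n,k$ and $1\le r,s\le k$, $\mathcal A_n^{(k)}(r\to s)$ is the set of integer sequences $(a_1,\dots,a_n)$ with $a_1=r$, $a_n=s$, $1\le a_i\le k$ for all $i$, which are alternating in the sense $a_1\le a_2\ge a_3\le a_4\ge\cdots$, i.e. $a_{2j-1}\le a_{2j}$ and $a_{2j}\ge a_{2j+1}$ whenever the indices are in range. $U_n(x)$ is the $n$-th Chebyshev polynomial of the second kind ($U_0=1$, $U_1(x)=2x$, $U_{n+1}(x)=2xU_n(x)-U_{n-1}(x)$). *)

theory Defs
  imports "HOL-Computational_Algebra.Computational_Algebra"
begin

fun cheb_U :: "nat \<Rightarrow> real poly" where
  "cheb_U 0 = 1"
| "cheb_U (Suc 0) = [:0, 2:]"
| "cheb_U (Suc (Suc n)) = [:0, 2:] * cheb_U (Suc n) - cheb_U n"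

definition U_half :: "nat \<Rightarrow> real fps" where
  "U_half n = fps_of_poly (pcompose (cheb_U n) [:0, 1/2:])"

text \<open>A_n^(k)(r -> s) with sequences stored as lists, 0-indexed:
  list index i corresponds to a_(i+1); a_1 <= a_2 >= a_3 <= ... means
  a!i <= a!(i+1) for even i and a!i >= a!(i+1) for odd i.\<close>
definition alt_seqs :: "nat \<Rightarrow> nat \<Rightarrow> nat \<Rightarrow> nat \<Rightarrow> nat list set" where
  "alt_seqs n k r s = {a. length a = n \<and> n \<ge> 1 \<and> a ! 0 = r \<and> a ! (n - 1) = s
      \<and> (\<forall>i<n. 1 \<le> a ! i \<and> a ! i \<le> k)
      \<and> (\<forall>i. i + 1 < n \<longrightarrow>
            (if even i then a ! i \<le> a ! (i + 1) else a ! i \<ge> a ! (i + 1)))}"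

end

theory Submission
  imports Defs
begin

text \<open>
  Write W_n = U_(n-1)(x/2), so that W_0 = 0, and interleave the generating functions of the odd-
  and even-length sequences ending in t = 1..k into one sequence f_0, ..., f_(2k+1) with
  f_0 = f_(2k+1) = 0. Removing the last entry of a sequence gives f_(2t) = f_(2t-2) + x f_(2t-1)
  and, up to the single sequence (r) of length one, f_(2t+1) = f_(2t-1) - x f_(2t). After a sign
  twist both become e_(j+1) = x e_j - e_(j-1), with one source term at j = m = 2r - 1. This
  discrete boundary value problem on 0..N, N = 2k + 1, is solved by the Green's function
  W_min(j,m) W_(N - max(j,m)) / W_N, whose jump at m comes from the identity
  W_(a+1) W_(b+1) - W_a W_b = W_(a+b+1); the solution is unique because W_N is nonzero.
\<close>

lemma U_half_0 [simp]: "U_half 0 = 1"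
  by (simp add: U_half_def pcompose_1)

lemma U_half_Suc_Suc: "U_half (Suc (Suc n)) = fps_X * U_half (Suc n) - U_half n"
  and U_half_1: "U_half (Suc 0) = fps_X"
proof -
  have X: "pcompose [:0, 2:] [:0, 1/2 :: real:] = [:0, 1:]"
    by (simp add: pcompose_pCons)
  show "U_half (Suc (Suc n)) = fps_X * U_half (Suc n) - U_half n"
    unfolding U_half_def cheb_U.simps(3) pcompose_diff pcompose_mult X
    by (simp add: fps_of_poly_mult fps_of_poly_diff)
  show "U_half (Suc 0) = fps_X"
    by (simp add: U_half_def X)
qed

definition U_shift :: "nat \<Rightarrow> real fps" where
  "U_shift n = (if n = 0 then 0 else U_half (n - 1))"

lemma U_shift_0 [simp]: "U_shift 0 = 0"
  and U_shift_1 [simp]: "U_shift (Suc 0) = 1"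
  and U_shift_Suc: "U_shift (Suc n) = U_half n"
  by (simp_all add: U_shift_def)

lemma U_shift_Suc_Suc: "U_shift (Suc (Suc n)) = fps_X * U_shift (Suc n) - U_shift n"
  by (cases n) (simp_all add: U_shift_Suc U_half_1 U_half_Suc_Suc)

lemma U_shift_rec: "1 \<le> n \<Longrightarrow> U_shift (Suc n) = fps_X * U_shift n - U_shift (n - 1)"
  using U_shift_Suc_Suc[of "n - 1"] by (simp add: Suc_diff_1)

lemma U_shift_leading_coeff: "U_shift (Suc n) $ n = 1 \<and> (\<forall>i\<ge>n. U_shift n $ i = 0)"
proof (induction n rule: induct_nat_012)
  case 0
  then show ?case by simp
next
  case 1
  then show ?case by (simp add: U_shift_Suc U_half_1)
next
  case (ge2 n)
  then show ?case by (auto simp: U_shift_Suc_Suc)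
qed

lemma U_shift_nth_0: "U_shift n $ 0 = (if even n then 0 else (-1) ^ (n div 2))"
proof (induction n rule: nat_induct2)
  case (step n)
  then show ?case
    using U_shift_Suc_Suc[of n] by simp
qed simp_all

lemma U_shift_nonzero: "1 \<le> n \<Longrightarrow> U_shift n \<noteq> 0"
  using U_shift_leading_coeff[of "n - 1"] by auto

lemma U_shift_addition: "U_shift (Suc a) * U_shift (Suc b) - U_shift a * U_shift b = U_shift (a + b + 1)"
proof (induction a arbitrary: b)
  case 0
  then show ?case by simp
next
  case (Suc a)
  have "U_shift (Suc (Suc a)) * U_shift (Suc b) - U_shift (Suc a) * U_shift b
      = U_shift (Suc a) * U_shift (Suc (Suc b)) - U_shift a * U_shift (Suc b)"
    by (simp only: U_shift_Suc_Suc) (simp add: algebra_simps)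
  also have "\<dots> = U_shift (a + Suc b + 1)"
    by (rule Suc.IH)
  finally show ?case by simp
qed

lemma homogeneous_recurrence_eq_U_shift:
  assumes "e 0 = 0"
    and rec: "\<And>j. 1 \<le> j \<Longrightarrow> j < N \<Longrightarrow> e (Suc j) = fps_X * e j - e (j - 1)"
  shows "j \<le> N \<Longrightarrow> e j = e 1 * U_shift j"
proof (induction j rule: nat_less_induct)
  case (1 j)
  show ?case
  proof (cases "j \<le> 1")
    case True
    then show ?thesis using assms(1) by (cases j) auto
  next
    case False
    then obtain i where j: "j = Suc i" and i: "1 \<le> i" "i < N"
      using "1.prems" by (cases j) auto
    have "e j = fps_X * (e 1 * U_shift i) - e 1 * U_shift (i - 1)"
      using rec[OF i] "1.IH" "1.prems" j by simp
    also have "\<dots> = e 1 * U_shift j"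
      by (simp add: j U_shift_rec[OF i(1)] algebra_simps)
    finally show ?thesis .
  qed
qed

definition green_kernel :: "nat \<Rightarrow> nat \<Rightarrow> nat \<Rightarrow> real fps" where
  "green_kernel N m j = U_shift (min j m) * U_shift (N - max j m)"

lemma green_kernel_rec:
  assumes "1 \<le> j" "j < N" "m < N"
  shows "green_kernel N m (Suc j)
    = fps_X * green_kernel N m j - green_kernel N m (j - 1) - of_bool (j = m) * U_shift N"
proof -
  consider "j < m" | "j = m" | "m < j" by linarith
  then show ?thesis
  proof cases
    case 1
    then show ?thesis
      by (simp add: green_kernel_def U_shift_rec[OF assms(1)] algebra_simps)
  next
    case 2
    have "U_shift (Suc m) * U_shift (Suc (N - Suc m)) - U_shift m * U_shift (N - Suc m) = U_shift N"
      using U_shift_addition[of m "N - Suc m"] assms by simp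
    then show ?thesis
      using 2 assms by (simp add: green_kernel_def Suc_diff_Suc U_shift_rec algebra_simps)
  next
    case 3
    then have "min (j - 1) m = m" "max (j - 1) m = j - 1" "N - (j - 1) = Suc (N - j)"
      "N - Suc j = N - j - 1" "1 \<le> N - j"
      using assms by auto
    with 3 show ?thesis
      by (simp add: green_kernel_def U_shift_rec algebra_simps)
  qed
qed

lemma green_kernel_0 [simp]: "green_kernel N m 0 = 0"
  and green_kernel_end: "m \<le> N \<Longrightarrow> green_kernel N m N = 0"
  by (simp_all add: green_kernel_def)

lemma boundary_problem_eq_green_kernel:
  fixes e :: "nat \<Rightarrow> real fps"
  assumes "m < N" "e 0 = 0" "e N = 0"
    and rec: "\<And>j. 1 \<le> j \<Longrightarrow> j < N \<Longrightarrow> e (Suc j) = fps_X * e j - e (j - 1) - of_bool (j = m) * c"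
    and "j \<le> N"
  shows "U_shift N * e j = c * green_kernel N m j"
proof -
  define d where "d i = U_shift N * e i - c * green_kernel N m i" for i
  have d_rec: "d (Suc i) = fps_X * d i - d (i - 1)" if "1 \<le> i" "i < N" for i
    unfolding d_def rec[OF that] green_kernel_rec[OF that assms(1)]
    by (simp add: algebra_simps)
  have d_eq: "d i = d 1 * U_shift i" if "i \<le> N" for i
    using homogeneous_recurrence_eq_U_shift[of d N i] d_rec that assms(2) by (simp add: d_def)
  have "d 1 * U_shift N = 0"
    using d_eq[of N] assms(1,3) by (simp add: d_def green_kernel_end)
  then have "d 1 = 0"
    using U_shift_nonzero[of N] assms(1) by simp
  then show ?thesis
    using d_eq[OF assms(5)] by (simp add: d_def)
qed

lemma alt_seqs_memD:
  assumes "a \<in> alt_seqs n k r t"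
  shows "length a = n" "1 \<le> n" "last a = t" "1 \<le> t" "t \<le> k"
proof -
  show "length a = n" "1 \<le> n"
    using assms unfolding alt_seqs_def by auto
  then show "last a = t"
    using assms last_conv_nth[of a] unfolding alt_seqs_def by force
  show "1 \<le> t" "t \<le> k"
    using assms unfolding alt_seqs_def by (auto dest: spec[of _ "n - 1"])
qed

lemma alt_seqs_eq_empty: "t = 0 \<or> k < t \<Longrightarrow> alt_seqs n k r t = {}"
  using alt_seqs_memD(4,5) by fastforce

lemma finite_alt_seqs: "finite (alt_seqs n k r t)"
proof (rule finite_subset)
  show "alt_seqs n k r t \<subseteq> {a. set a \<subseteq> {0..k} \<and> length a = n}"
    unfolding alt_seqs_def by (auto simp: in_set_conv_nth)
  show "finite {a. set a \<subseteq> {0..k} \<and> length a = n}"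
    by (rule finite_lists_length_eq) simp
qed

lemma alt_seqs_1: "1 \<le> t \<Longrightarrow> t \<le> k \<Longrightarrow> alt_seqs 1 k r t = (if t = r then {[t]} else {})"
  unfolding alt_seqs_def by (auto simp: length_Suc_conv)

lemma snoc_in_alt_seqs_iff:
  assumes "1 \<le> n" "length b = n"
  shows "b @ [t] \<in> alt_seqs (Suc n) k r t \<longleftrightarrow>
    b \<in> alt_seqs n k r (last b) \<and> 1 \<le> t \<and> t \<le> k \<and> (if odd n then last b \<le> t else t \<le> last b)"
proof -
  have last: "last b = b ! (n - 1)"
    using assms last_conv_nth[of b] by fastforce
  have all_less_Suc: "(\<forall>i<Suc n. P i) \<longleftrightarrow> (\<forall>i<n. P i) \<and> P n" for P
    by (auto simp: less_Suc_eq)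
  have all_step_Suc: "(\<forall>i. i + 1 < Suc n \<longrightarrow> P i) \<longleftrightarrow> (\<forall>i. i + 1 < n \<longrightarrow> P i) \<and> P (n - 1)" for P
    using assms(1) by (auto simp: less_Suc_eq)
  show ?thesis
    unfolding alt_seqs_def all_less_Suc all_step_Suc last
    using assms by (auto simp: nth_append)
qed

lemma alt_seqs_Suc:
  assumes "1 \<le> n" "1 \<le> t" "t \<le> k"
  shows "alt_seqs (Suc n) k r t = (\<lambda>b. b @ [t]) `
    (\<Union>s \<in> {s. s \<le> k \<and> (if odd n then s \<le> t else t \<le> s)}. alt_seqs n k r s)"
proof (intro equalityI subsetI)
  fix a
  assume a: "a \<in> alt_seqs (Suc n) k r t"
  define b where "b = butlast a"
  have "a \<noteq> []" "last a = t" "length b = n"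
    using alt_seqs_memD[OF a] by (auto simp: b_def)
  then have "a = b @ [t]"
    unfolding b_def by (metis append_butlast_last_id)
  with a have "b \<in> alt_seqs n k r (last b)" "last b \<le> k" "if odd n then last b \<le> t else t \<le> last b"
    using snoc_in_alt_seqs_iff[OF assms(1) \<open>length b = n\<close>] alt_seqs_memD(5) by auto
  with \<open>a = b @ [t]\<close> show "a \<in> (\<lambda>b. b @ [t]) ` (\<Union>s \<in> {s. s \<le> k \<and> (if odd n then s \<le> t else t \<le> s)}. alt_seqs n k r s)"
    by blast
next
  fix a
  assume "a \<in> (\<lambda>b. b @ [t]) ` (\<Union>s \<in> {s. s \<le> k \<and> (if odd n then s \<le> t else t \<le> s)}. alt_seqs n k r s)"
  then obtain b s where "a = b @ [t]" "b \<in> alt_seqs n k r s" "if odd n then s \<le> t else t \<le> s"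
    by auto
  moreover have "length b = n" "last b = s"
    using alt_seqs_memD \<open>b \<in> alt_seqs n k r s\<close> by blast+
  ultimately show "a \<in> alt_seqs (Suc n) k r t"
    using snoc_in_alt_seqs_iff[OF assms(1)] assms(2,3) by simp
qed

lemma card_alt_seqs_Suc:
  assumes "1 \<le> n" "1 \<le> t" "t \<le> k"
  shows "card (alt_seqs (Suc n) k r t) =
    (\<Sum>s | s \<le> k \<and> (if odd n then s \<le> t else t \<le> s). card (alt_seqs n k r s))"
proof -
  let ?S = "{s. s \<le> k \<and> (if odd n then s \<le> t else t \<le> s)}"
  have "card (alt_seqs (Suc n) k r t) = card (\<Union>s \<in> ?S. alt_seqs n k r s)"
    unfolding alt_seqs_Suc[OF assms] by (rule card_image) (simp add: inj_on_def)
  also have "\<dots> = (\<Sum>s \<in> ?S. card (alt_seqs n k r s))"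
    by (rule card_UN_disjoint) (auto simp: finite_alt_seqs dest: alt_seqs_memD(3))
  finally show ?thesis .
qed

lemma card_alt_seqs_ascent:
  assumes "odd n" "t \<le> k"
  shows "card (alt_seqs (Suc n) k r t) = (\<Sum>s\<le>t. card (alt_seqs n k r s))"
proof (cases "t = 0")
  case True
  then show ?thesis by (simp add: alt_seqs_eq_empty)
next
  case False
  have "{s. s \<le> k \<and> s \<le> t} = {..t}"
    using assms(2) by auto
  then show ?thesis
    using card_alt_seqs_Suc[of n t k r] assms False odd_pos[of n] by simp
qed

lemma card_alt_seqs_descent:
  assumes "even n" "2 \<le> n" "1 \<le> t"
  shows "card (alt_seqs (Suc n) k r t) = (\<Sum>s \<in> {t..k}. card (alt_seqs n k r s))"
proof (cases "t \<le> k")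
  case True
  have "{s. s \<le> k \<and> t \<le> s} = {t..k}"
    by auto
  then show ?thesis
    using card_alt_seqs_Suc[of n t k r] assms True by simp
next
  case False
  then show ?thesis by (simp add: alt_seqs_eq_empty)
qed

text \<open>Index j = 2t - 1 holds the odd-length sequences ending in t (even powers of x),
  index j = 2t the even-length ones (odd powers).\<close>
definition alt_gf :: "nat \<Rightarrow> nat \<Rightarrow> nat \<Rightarrow> real fps" where
  "alt_gf k r j = Abs_fps (\<lambda>m. if even m \<longleftrightarrow> odd j
      then real (card (alt_seqs (m + 1) k r ((j + 1) div 2))) else 0)"

lemma alt_gf_eq_0: "j = 0 \<or> 2 * k < j \<Longrightarrow> alt_gf k r j = 0"
  by (rule fps_ext) (auto simp: alt_gf_def alt_seqs_eq_empty)

lemma alt_gf_ascent: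
  assumes "1 \<le> t" "t \<le> k"
  shows "alt_gf k r (2 * t) = alt_gf k r (2 * t - 2) + fps_X * alt_gf k r (2 * t - 1)"
proof (rule fps_ext)
  fix m
  have idx: "(2 * t - 2 + 1) div 2 = t - 1" "(2 * t - 2) div 2 = t - 1" "(2 * t - 1 + 1) div 2 = t"
    "odd (2 * t - 1)"
    using assms(1) by presburger+
  show "alt_gf k r (2 * t) $ m = (alt_gf k r (2 * t - 2) + fps_X * alt_gf k r (2 * t - 1)) $ m"
  proof (cases "odd m")
    case True
    then obtain m' where m: "m = Suc m'"
      by (cases m) auto
    have "card (alt_seqs (Suc m) k r t) = card (alt_seqs (Suc m) k r (t - 1)) + card (alt_seqs m k r t)"
      using card_alt_seqs_ascent[OF True, of t k r] card_alt_seqs_ascent[OF True, of "t - 1" k r] assms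
      by (cases t) auto
    then show ?thesis
      using True assms by (simp add: alt_gf_def idx m)
  next
    case False
    then show ?thesis
      using assms by (cases m) (simp_all add: alt_gf_def idx)
  qed
qed

lemma alt_gf_descent:
  assumes "1 \<le> t" "t \<le> k" "r \<le> k"
  shows "alt_gf k r (2 * t + 1) - of_bool (t + 1 = r)
    = alt_gf k r (2 * t - 1) - of_bool (t = r) - fps_X * alt_gf k r (2 * t)"
proof (rule fps_ext)
  fix m
  have idx: "(2 * t - 1 + 1) div 2 = t" "odd (2 * t - 1)"
    using assms(1) by presburger+
  show "(alt_gf k r (2 * t + 1) - of_bool (t + 1 = r)) $ m
    = (alt_gf k r (2 * t - 1) - of_bool (t = r) - fps_X * alt_gf k r (2 * t)) $ m"
  proof (cases "m = 0")
    case True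
    have "card (alt_seqs 1 k r (Suc t)) = of_bool (Suc t = r)"
      using alt_seqs_1[of "Suc t" k r] alt_seqs_eq_empty[of "Suc t" k 1 r] assms(3)
      by (cases "Suc t \<le> k") auto
    then show ?thesis
      using True assms alt_seqs_1[of t k r] by (simp add: alt_gf_def idx)
  next
    case False
    show ?thesis
    proof (cases "even m")
      case True
      then have "2 \<le> m"
        using False by presburger
      then have "card (alt_seqs (Suc m) k r t) = card (alt_seqs (Suc m) k r (Suc t)) + card (alt_seqs m k r t)"
        using card_alt_seqs_descent[OF True, of t k r] card_alt_seqs_descent[OF True, of "Suc t" k r] assms
        by (simp add: sum.atLeast_Suc_atMost)
      then show ?thesis
        using True False assms by (cases m) (simp_all add: alt_gf_def idx)
    next
      case odd: False
      then show ?thesis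
        using False assms by (cases m) (simp_all add: alt_gf_def idx)
    qed
  qed
qed

text \<open>The subtracted constant counts the sequence (r) of length one.\<close>
definition signed_alt_gf :: "nat \<Rightarrow> nat \<Rightarrow> nat \<Rightarrow> real fps" where
  "signed_alt_gf k r j = (-1) ^ ((j + 1) div 2) * (alt_gf k r j - of_bool (j = 2 * r - 1))"

lemma signed_alt_gf_rec:
  assumes "1 \<le> r" "r \<le> k" "1 \<le> j" "j \<le> 2 * k"
  shows "signed_alt_gf k r (Suc j) = fps_X * signed_alt_gf k r j - signed_alt_gf k r (j - 1)
    - of_bool (j = 2 * r - 1) * ((-1) ^ (r + 1) * fps_X)"
proof (cases "odd j")
  case True
  define t where "t = (j + 1) div 2"
  have t: "1 \<le> t" "t \<le> k" "j = 2 * t - 1" "Suc j = 2 * t" "j - 1 = 2 * t - 2"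
    using True assms unfolding t_def by presburger+
  have idx: "(2 * t + 1) div 2 = t" "(2 * t - 1 + 1) div 2 = t" "(2 * t - 2 + 1) div 2 = t - 1"
    and src: "2 * t \<noteq> 2 * r - 1" "2 * t - 2 \<noteq> 2 * r - 1" "2 * t - 1 = 2 * r - 1 \<longleftrightarrow> t = r"
    using t(1) assms(1) by presburger+
  have sign: "(-1) ^ (t - 1) = - ((-1) ^ t :: real fps)"
    using t(1) by (cases t) auto
  have "signed_alt_gf k r (2 * t) = (-1) ^ t * alt_gf k r (2 * t)"
    "signed_alt_gf k r (2 * t - 1) = (-1) ^ t * (alt_gf k r (2 * t - 1) - of_bool (t = r))"
    "signed_alt_gf k r (2 * t - 2) = - ((-1) ^ t * alt_gf k r (2 * t - 2))"
    using src unfolding signed_alt_gf_def idx sign by simp_all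
  note signed = this
  show ?thesis
    unfolding t(4,5) unfolding t(3) signed alt_gf_ascent[OF t(1,2)] src(3)
    by (cases "t = r") (simp_all add: algebra_simps)
next
  case False
  define t where "t = j div 2"
  have t: "1 \<le> t" "t \<le> k" "j = 2 * t"
    using False assms unfolding t_def by presburger+
  have idx: "(Suc (2 * t) + 1) div 2 = t + 1" "(2 * t + 1) div 2 = t" "(2 * t - 1 + 1) div 2 = t"
    and src: "2 * t \<noteq> 2 * r - 1" "Suc (2 * t) = 2 * r - 1 \<longleftrightarrow> t + 1 = r"
      "2 * t - 1 = 2 * r - 1 \<longleftrightarrow> t = r"
    using t(1) assms(1) by presburger+
  have "signed_alt_gf k r (Suc (2 * t)) = - ((-1) ^ t * (alt_gf k r (2 * t + 1) - of_bool (t + 1 = r)))"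
    "signed_alt_gf k r (2 * t) = (-1) ^ t * alt_gf k r (2 * t)"
    "signed_alt_gf k r (2 * t - 1) = (-1) ^ t * (alt_gf k r (2 * t - 1) - of_bool (t = r))"
    using src unfolding signed_alt_gf_def idx by simp_all
  note signed = this
  have "signed_alt_gf k r (Suc j)
      = - ((-1) ^ t * (alt_gf k r (2 * t - 1) - of_bool (t = r) - fps_X * alt_gf k r (2 * t)))"
    unfolding t(3) signed(1) alt_gf_descent[OF t(1,2) assms(2)] ..
  also have "\<dots> = fps_X * signed_alt_gf k r j - signed_alt_gf k r (j - 1)"
    unfolding t(3) signed(2,3) by (simp add: algebra_simps)
  finally show ?thesis
    using src(1) t(3) by simp
qed

lemma signed_alt_gf_eq_green_kernel:
  assumes "1 \<le> r" "r \<le> k" "j \<le> 2 * k + 1"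
  shows "U_shift (2 * k + 1) * signed_alt_gf k r j
    = (-1) ^ (r + 1) * fps_X * green_kernel (2 * k + 1) (2 * r - 1) j"
proof (rule boundary_problem_eq_green_kernel)
  show "signed_alt_gf k r 0 = 0" "signed_alt_gf k r (2 * k + 1) = 0"
    using assms by (simp_all add: signed_alt_gf_def alt_gf_eq_0)
  show "signed_alt_gf k r (Suc i) = fps_X * signed_alt_gf k r i - signed_alt_gf k r (i - 1)
      - of_bool (i = 2 * r - 1) * ((-1) ^ (r + 1) * fps_X)" if "1 \<le> i" "i < 2 * k + 1" for i
    using signed_alt_gf_rec[OF assms(1,2) that(1)] that(2) by simp
qed (use assms in auto)

lemma alt_gf_closed_form:
  assumes "1 \<le> r" "r \<le> k" "1 \<le> j" "j \<le> 2 * k"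
  shows "alt_gf k r j = (-1) ^ (r + (j + 1) div 2 + 1)
      * (fps_X * U_half (min j (2 * r - 1) - 1) * U_half (2 * k - max j (2 * r - 1)) / U_half (2 * k))
      + of_bool (j = 2 * r - 1)"
proof -
  let ?U = "U_half (2 * k)"
  have "?U $ 0 \<noteq> 0"
    using U_shift_nth_0[of "2 * k + 1"] by (simp add: U_shift_Suc)
  then have div: "f / ?U = f * inverse ?U" for f
    by (rule fps_divide_unit)
  have "inverse ?U * ?U * signed_alt_gf k r j
      = inverse ?U * ((-1) ^ (r + 1) * fps_X * green_kernel (2 * k + 1) (2 * r - 1) j)"
    using signed_alt_gf_eq_green_kernel[OF assms(1,2), of j] assms(4)
    by (simp add: U_shift_Suc mult.assoc)
  then have "signed_alt_gf k r j
      = (-1) ^ (r + 1) * fps_X * green_kernel (2 * k + 1) (2 * r - 1) j * inverse ?U"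
    using inverse_mult_eq_1[OF \<open>?U $ 0 \<noteq> 0\<close>] by (simp add: ac_simps)
  moreover have "alt_gf k r j = (-1) ^ ((j + 1) div 2) * signed_alt_gf k r j + of_bool (j = 2 * r - 1)"
    by (simp add: signed_alt_gf_def mult.assoc[symmetric] power_mult_distrib[symmetric])
  moreover have "green_kernel (2 * k + 1) (2 * r - 1) j
      = U_half (min j (2 * r - 1) - 1) * U_half (2 * k - max j (2 * r - 1))"
    using assms by (simp add: green_kernel_def U_shift_def Suc_diff_le)
  ultimately show ?thesis
    unfolding div by (simp add: power_add ac_simps)
qed

lemma alt_gf_odd_length:
  assumes "1 \<le> r" "r \<le> k" "1 \<le> s" "s \<le> k"
  shows "alt_gf k r (2 * s - 1) =
           (if r < s then
              (-1) ^ (r + s + 1) * (fps_X * U_half (2*r - 2) * U_half (2*k + 1 - 2*s) / U_half (2*k))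
            else if r = s then
              1 - fps_X * U_half (2*r - 2) * U_half (2*k + 1 - 2*r) / U_half (2*k)
            else
              (-1) ^ (r + s + 1) * (fps_X * U_half (2*s - 2) * U_half (2*k + 1 - 2*r) / U_half (2*k)))"
proof -
  have "(2 * s - 1 + 1) div 2 = s" "2 * s - 1 = 2 * r - 1 \<longleftrightarrow> s = r"
    using assms(1,3) by auto
  moreover have "2 * k - max (2 * s - 1) (2 * r - 1) = 2 * k + 1 - 2 * max s r"
    "min (2 * s - 1) (2 * r - 1) - 1 = 2 * min s r - 2"
    using assms by (auto simp: max_def min_def)
  moreover have "1 \<le> 2 * s - 1" "2 * s - 1 \<le> 2 * k"
    using assms by auto
  ultimately show ?thesis
    using alt_gf_closed_form[OF assms(1,2)] by (auto simp: max_def min_def)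
qed

lemma alt_gf_even_length:
  assumes "1 \<le> r" "r \<le> k" "1 \<le> s" "s \<le> k"
  shows "alt_gf k r (2 * s) =
           (if r \<le> s then
              (-1) ^ (r + s + 1) * (fps_X * U_half (2*r - 2) * U_half (2*k - 2*s) / U_half (2*k))
            else
              (-1) ^ (r + s + 1) * (fps_X * U_half (2*s - 1) * U_half (2*k - 2*r + 1) / U_half (2*k)))"
proof -
  have "(2 * s + 1) div 2 = s" "2 * s \<noteq> 2 * r - 1"
    using assms(1) by presburger+
  moreover have "r \<le> s \<Longrightarrow> min (2 * s) (2 * r - 1) - 1 = 2 * r - 2 \<and> max (2 * s) (2 * r - 1) = 2 * s"
    "s < r \<Longrightarrow> min (2 * s) (2 * r - 1) - 1 = 2 * s - 1 \<and> 2 * k - max (2 * s) (2 * r - 1) = 2 * k - 2 * r + 1"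
    using assms by auto
  ultimately show ?thesis
    using alt_gf_closed_form[of r k "2 * s"] assms by auto
qed

theorem theorem4:
  fixes k r s :: nat
  assumes "1 \<le> r" "r \<le> k" "1 \<le> s" "s \<le> k"
  shows "Abs_fps (\<lambda>m. if even m then real (card (alt_seqs (m + 1) k r s)) else 0) =
           (if r < s then
              (-1) ^ (r + s + 1) * (fps_X * U_half (2*r - 2) * U_half (2*k + 1 - 2*s) / U_half (2*k))
            else if r = s then
              1 - fps_X * U_half (2*r - 2) * U_half (2*k + 1 - 2*r) / U_half (2*k)
            else
              (-1) ^ (r + s + 1) * (fps_X * U_half (2*s - 2) * U_half (2*k + 1 - 2*r) / U_half (2*k)))
       \<and> Abs_fps (\<lambda>m. if odd m then real (card (alt_seqs (m + 1) k r s)) else 0) =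
           (if r \<le> s then
              (-1) ^ (r + s + 1) * (fps_X * U_half (2*r - 2) * U_half (2*k - 2*s) / U_half (2*k))
            else
              (-1) ^ (r + s + 1) * (fps_X * U_half (2*s - 1) * U_half (2*k - 2*r + 1) / U_half (2*k)))"
proof -
  have idx: "(2 * s - 1 + 1) div 2 = s" "(2 * s + 1) div 2 = s" "odd (2 * s - 1)"
    using assms(3) by presburger+
  have "Abs_fps (\<lambda>m. if even m then real (card (alt_seqs (m + 1) k r s)) else 0) = alt_gf k r (2 * s - 1)"
    "Abs_fps (\<lambda>m. if odd m then real (card (alt_seqs (m + 1) k r s)) else 0) = alt_gf k r (2 * s)"
    unfolding alt_gf_def idx(1,2) using idx(3) by simp_all
  then show ?thesis
    using alt_gf_odd_length[OF assms] alt_gf_even_length[OF assms] by simp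
qed

end
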